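(* For $\tau$ in the upper half-plane: (a) $x=\mathfrak{b}(\tau)$ and $y=\mathfrak{b}(2\tau)$ satisfy $x^2y^2+4y^2-16x=0$; (b) $(\mathfrak{b}(\tau)+2)^4\,\mathfrak{b}^4(4\tau)=2^8\left(\mathfrak{b}^3(\tau)+4\mathfrak{b}(\tau)\right)$.
   Context: $q=e^{2\pi i\tau}$, $q^r:=e^{2\pi i r\tau}$, and $\mathfrak{b}(\tau)=2\prod_{n\ge1}\left(\frac{1-q^{n/2-1/4}}{1+q^{n/2-1/4}}\right)^2$ (equivalently $2\mathfrak{f}_1(\tau/2)^2/\mathfrak{f}(\tau/2)^2$ with Weber–Schläfli functions $\mathfrak{f},\mathfrak{f}_1$). *)

theory Defs
  imports "HOL-Complex_Analysis.Complex_Analysis"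
begin

definition qpow :: "complex \<Rightarrow> real \<Rightarrow> complex" where
  "qpow \<tau> r = exp (2 * of_real pi * \<i> * of_real r * \<tau>)"

text \<open>b(tau) = 2 * prod_{n>=1} ((1 - q^(n/2-1/4)) / (1 + q^(n/2-1/4)))^2.
  The product index n runs over n \<ge> 1; we shift to m = n - 1 \<ge> 0.\<close>
definition bfun :: "complex \<Rightarrow> complex" where
  "bfun \<tau> = 2 * (\<Prod>m. ((1 - qpow \<tau> (real (Suc m) / 2 - 1 / 4)) /
                          (1 + qpow \<tau> (real (Suc m) / 2 - 1 / 4))) ^ 2)"

end

theory Submission
  imports Defs
begin

text \<open>With the nome q = exp (pi i tau / 2) put A = prod (1 - q^(2n+1)), B = prod (1 + q^(2n+1))
  and C = prod (1 + q^(4n+2)). Then b(tau) = 2 A^2 / B^2 and b(2 tau) = 2 A^2 B^2 / C^2, and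
  part (a) becomes Jacobi's quartic identity A^2 B^2 (A^4 + B^4) = 2 C^4.

  For the latter let theta(z) = prod (1 + z q^(2n+1)) (1 + q^(2n+1) / z), so that
  q z theta(q^2 z) = theta(z). Both N(z) = theta(z)^2 + theta(-z)^2 and D(z) = theta(i z) theta(-i z)
  (theta_sqsum and theta_iprod below) satisfy q^2 z^2 f(q^2 z) = f(z). On the annulus
  |q|^3 < |z| < 1/|q| the only zeros of D are the simple zeros +-iq, where N vanishes as well;
  hence N/D extends holomorphically to the annulus and is invariant under z \<mapsto> q^2 z. Its
  modulus therefore attains its maximum on the closed fundamental annulus |q|^2 \<le> |z| \<le> 1, so
  N/D is constant by the maximum modulus principle. Comparing z = 1 with z = i gives the quartic
  identity. Part (b) follows by applying (a) at tau and at 2 tau and eliminating b(2 tau).\<close>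

lemma convergent_prod_linear:
  fixes a :: "nat \<Rightarrow> complex"
  assumes "summable (\<lambda>n. norm (a n))"
  shows "convergent_prod (\<lambda>n. 1 + w * a n)"
proof -
  have "summable (\<lambda>n. norm w * norm (a n))"
    using assms by (rule summable_mult)
  then show ?thesis
    by (intro abs_convergent_prod_imp_convergent_prod summable_imp_abs_convergent_prod)
       (simp add: norm_mult)
qed

lemma prodinf_linear_nonzero:
  fixes a :: "nat \<Rightarrow> complex"
  assumes "summable (\<lambda>n. norm (a n))" and small: "\<And>n. norm (w * a n) < 1"
  shows "(\<Prod>n. 1 + w * a n) \<noteq> 0"
proof (rule prodinf_nonzero[OF convergent_prod_linear[OF assms(1)]])
  fix n
  show "1 + w * a n \<noteq> 0"
    using small[of n] by (metis add_eq_0_iff norm_minus_cancel norm_one order_less_irrefl)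
qed

lemma uniform_limit_prodinf_linear:
  fixes a :: "nat \<Rightarrow> complex"
  assumes a: "summable (\<lambda>n. norm (a n))"
  shows "uniform_limit (cball 0 R) (\<lambda>N w. \<Prod>n<N. 1 + w * a n) (\<lambda>w. \<Prod>n. 1 + w * a n) sequentially"
proof -
  have "uniformly_convergent_on (cball 0 R) (\<lambda>N w. \<Prod>n<N. 1 + w * a n)"
  proof (rule uniformly_convergent_on_prod)
    show "uniformly_convergent_on (cball 0 R) (\<lambda>N w. \<Sum>n<N. norm (w * a n))"
    proof (rule Weierstrass_m_test')
      show "summable (\<lambda>n. R * norm (a n))"
        using a by (rule summable_mult)
    next
      fix n and w :: complex
      assume "w \<in> cball 0 R"
      then show "norm (norm (w * a n)) \<le> R * norm (a n)"
        by (simp add: norm_mult mult_right_mono)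
    qed
  qed (auto intro!: continuous_intros)
  moreover have "lim (\<lambda>N. \<Prod>n<N. 1 + w * a n) = (\<Prod>n. 1 + w * a n)" for w
    using convergent_prod_LIMSEQ[OF convergent_prod_linear[OF a]]
    by (intro limI) (simp add: LIMSEQ_lessThan_iff_atMost)
  ultimately show ?thesis
    by (simp add: uniformly_convergent_uniform_limit_iff)
qed

lemma prodinf_linear_holomorphic:
  fixes a :: "nat \<Rightarrow> complex"
  assumes a: "summable (\<lambda>n. norm (a n))"
  shows "(\<lambda>w. \<Prod>n. 1 + w * a n) holomorphic_on A"
proof (rule holomorphic_on_subset[of _ UNIV])
  show "(\<lambda>w. \<Prod>n. 1 + w * a n) holomorphic_on UNIV"
  proof (rule holomorphic_uniform_sequence)
    fix z :: complex
    have "cball z 1 \<subseteq> cball 0 (norm z + 1)"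
      by (simp add: cball_subset_cball_iff)
    then have "uniform_limit (cball z 1) (\<lambda>N w. \<Prod>n<N. 1 + w * a n) (\<lambda>w. \<Prod>n. 1 + w * a n) sequentially"
      by (rule uniform_limit_on_subset[OF uniform_limit_prodinf_linear[OF a]])
    then show "\<exists>d>0. cball z d \<subseteq> UNIV \<and>
        uniform_limit (cball z d) (\<lambda>N w. \<Prod>n<N. 1 + w * a n) (\<lambda>w. \<Prod>n. 1 + w * a n) sequentially"
      by (intro exI[of _ 1]) auto
  qed (auto intro!: holomorphic_intros)
qed auto

lemma holomorphic_factor_zero:
  assumes f: "f holomorphic_on S" "open S" and zero: "f a = 0"
  obtains g where "g holomorphic_on S" "\<And>z. f z = (z - a) * g z"
proof
  show "(\<lambda>z. if z = a then deriv f a else (f z - f a) / (z - a)) holomorphic_on S"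
    by (rule pole_lemma_open[OF f])
  show "f z = (z - a) * (if z = a then deriv f a else (f z - f a) / (z - a))" for z
    using zero by auto
qed

lemma multiplicatively_periodic_fundamental_annulus:
  fixes G :: "complex \<Rightarrow> 'a" and a b :: real
  defines "U \<equiv> {z. a < norm z \<and> norm z < b}"
  assumes p: "p \<noteq> 0" and ab: "norm p ^ 2 \<le> a" "a < norm p" "1 < b" "b * norm p \<le> 1"
    and periodic: "\<And>z. z \<in> U \<Longrightarrow> p * z \<in> U \<Longrightarrow> G (p * z) = G z"
    and z: "z \<in> U"
  obtains w where "norm p \<le> norm w" "norm w \<le> 1" "G z = G w"
proof -
  have "norm p * norm p < norm p * 1"
    using ab by (simp add: power2_eq_square)
  then have p1: "norm p < 1"
    using p by simp
  consider "norm z < norm p" | "norm p \<le> norm z \<and> norm z \<le> 1" | "1 < norm z"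
    by force
  then show ?thesis
  proof cases
    case 1
    define w where "w = z / p"
    have zw: "z = p * w"
      using p by (simp add: w_def)
    then have "norm p * norm p < norm p * norm w" "norm p * norm w < norm p * 1"
      using 1 z ab by (auto simp: U_def norm_mult power2_eq_square)
    then have "norm p \<le> norm w" "norm w < 1"
      using p by simp_all
    moreover have "norm p * norm w < 1 * norm w"
      using p1 calculation(1) p by (intro mult_strict_right_mono) auto
    then have "w \<in> U"
      using ab z calculation by (auto simp: U_def zw norm_mult)
    ultimately show ?thesis
      using that periodic[of w] z by (auto simp: zw)
  next
    case 3
    have "norm p * 1 \<le> norm p * norm z" "norm p * norm z \<le> norm p * b"
      using 3 z by (intro mult_left_mono; simp add: U_def)+
    then have "norm p \<le> norm (p * z)" "norm (p * z) \<le> 1"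
      using ab by (auto simp: norm_mult mult.commute)
    moreover have "p * z \<in> U"
      using ab z calculation by (auto simp: U_def)
    ultimately show ?thesis
      using that periodic[of z] z by metis
  qed (use that in auto)
qed

lemma multiplicatively_periodic_holomorphic_constant:
  fixes G :: "complex \<Rightarrow> complex" and a b :: real
  defines "U \<equiv> {z. a < norm z \<and> norm z < b}"
  assumes p: "p \<noteq> 0" and ab: "norm p ^ 2 \<le> a" "a < norm p" "1 < b" "b * norm p \<le> 1"
    and holo: "G holomorphic_on U"
    and periodic: "\<And>z. z \<in> U \<Longrightarrow> p * z \<in> U \<Longrightarrow> G (p * z) = G z"
  shows "G constant_on U"
proof -
  define K where "K = {z::complex. norm p \<le> norm z \<and> norm z \<le> 1}"
  have KU: "K \<subseteq> U"
    using ab by (auto simp: K_def U_def)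
  have "compact K"
    unfolding K_def compact_eq_bounded_closed
    by (auto intro!: closed_Collect_conj closed_Collect_le continuous_intros boundedI[of _ 1])
  moreover have "continuous_on K (\<lambda>z. norm (G z))"
    using holomorphic_on_imp_continuous_on[OF holomorphic_on_subset[OF holo KU]]
    by (intro continuous_intros)
  moreover have "1 \<in> K"
    using ab mult_right_mono[of 1 b "norm p"] by (simp add: K_def)
  ultimately obtain \<xi> where \<xi>: "\<xi> \<in> K" "\<And>z. z \<in> K \<Longrightarrow> norm (G z) \<le> norm (G \<xi>)"
    using continuous_attains_sup[of K "\<lambda>z. norm (G z)"] by blast
  have "norm (G z) \<le> norm (G \<xi>)" if z: "z \<in> U" for z
  proof -
    obtain w where "norm p \<le> norm w" "norm w \<le> 1" "G z = G w"
      using multiplicatively_periodic_fundamental_annulus[where G = G and p = p and a = a and b = b]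
        p ab periodic z unfolding U_def by blast
    then show ?thesis
      using \<xi>(2)[of w] by (simp add: K_def)
  qed
  moreover have "open U"
    unfolding U_def by (intro open_Collect_conj open_Collect_less continuous_intros)
  moreover have "connected U"
    using connected_annulus(1)[of a "0::complex" b] by (simp add: U_def)
  ultimately show ?thesis
    using maximum_modulus_principle[OF holo _ _ _ order_refl] \<xi>(1) KU by blast
qed

definition odd_prod :: "complex \<Rightarrow> complex \<Rightarrow> complex" where
  "odd_prod q w = (\<Prod>n. 1 + w * q ^ (2*n+1))"

lemma summable_norm_odd_powers:
  fixes q :: complex
  assumes "norm q < 1"
  shows "summable (\<lambda>n. norm (q ^ (2*n+1)))"
proof -
  have "summable (\<lambda>n. norm q * (norm q ^ 2) ^ n)"
    using assms by (intro summable_mult summable_geometric) (simp add: power_less_one_iff)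
  moreover have "norm (q ^ (2*n+1)) = norm q * (norm q ^ 2) ^ n" for n
    by (simp add: norm_mult norm_power power_mult)
  ultimately show ?thesis
    by simp
qed

lemma odd_prod_shift:
  assumes "norm q < 1"
  shows "odd_prod q w = (1 + q * w) * odd_prod q (q^2 * w)"
proof -
  have "(\<lambda>n. 1 + q^2 * w * q ^ (2*n+1)) has_prod odd_prod q (q^2 * w)"
    unfolding odd_prod_def
    by (intro convergent_prod_has_prod convergent_prod_linear summable_norm_odd_powers assms)
  moreover have shift: "q^2 * w * q ^ (2*n+1) = w * q ^ (2 * Suc n + 1)" for n
    by (simp add: power_add power2_eq_square)
  ultimately have "(\<lambda>n. 1 + w * q ^ (2 * Suc n + 1)) has_prod odd_prod q (q^2 * w)"
    by (simp only: shift)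
  then have "(\<lambda>n. 1 + w * q ^ (2*n+1)) has_prod (odd_prod q (q^2 * w) * (1 + w * q ^ (2*0+1)))"
    by (rule has_prod_Suc_imp)
  then show ?thesis
    unfolding odd_prod_def[of q w] by (simp add: has_prod_unique[symmetric] mult.commute)
qed

lemma odd_prod_nonzero:
  assumes "norm q < 1" "norm w * norm q < 1"
  shows "odd_prod q w \<noteq> 0"
  unfolding odd_prod_def
proof (rule prodinf_linear_nonzero[OF summable_norm_odd_powers[OF assms(1)]])
  fix n
  have "norm (w * q ^ (2*n+1)) = norm w * norm q * norm q ^ (2*n)"
    by (simp add: norm_mult norm_power)
  also have "\<dots> \<le> norm w * norm q"
    using assms(1) by (simp add: mult_left_le power_le_one)
  finally show "norm (w * q ^ (2*n+1)) < 1"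
    using assms(2) by simp
qed

lemma odd_prod_holomorphic:
  assumes "norm q < 1" "g holomorphic_on A"
  shows "(\<lambda>z. odd_prod q (g z)) holomorphic_on A"
proof -
  have "odd_prod q holomorphic_on g ` A"
    unfolding odd_prod_def[abs_def]
    by (rule prodinf_linear_holomorphic[OF summable_norm_odd_powers[OF assms(1)]])
  then show ?thesis
    using holomorphic_on_compose[OF assms(2)] by (simp add: o_def)
qed

lemma odd_prod_mult_minus:
  assumes q: "norm q < 1"
  shows "odd_prod q w * odd_prod q (-w) = odd_prod (q^2) (- (w^2))"
proof -
  have termwise: "(1 + w * q ^ (2*n+1)) * (1 + -w * q ^ (2*n+1)) = 1 + - (w^2) * (q^2) ^ (2*n+1)"
    for n
  proof -
    have "(q^2) ^ (2*n+1) = (q ^ (2*n+1))^2"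
      by (metis power_mult mult.commute)
    then show ?thesis
      by (simp add: algebra_simps power2_eq_square)
  qed
  have "odd_prod q w * odd_prod q (-w) = (\<Prod>n. (1 + w * q ^ (2*n+1)) * (1 + -w * q ^ (2*n+1)))"
    unfolding odd_prod_def
    by (intro prodinf_mult convergent_prod_linear summable_norm_odd_powers q)
  then show ?thesis
    unfolding termwise odd_prod_def .
qed

text \<open>Jacobi's triple product without its factor prod (1 - q^(2n+2)).\<close>
definition theta_prod :: "complex \<Rightarrow> complex \<Rightarrow> complex" where
  "theta_prod q w = odd_prod q w * odd_prod q (inverse w)"

lemma theta_prod_inverse: "theta_prod q (inverse w) = theta_prod q w"
  by (simp add: theta_prod_def mult.commute)

lemma theta_prod_shift:
  assumes q: "norm q < 1" "q \<noteq> 0" and w: "w \<noteq> 0"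
  shows "q * w * theta_prod q (q^2 * w) = theta_prod q w"
proof -
  have inv: "q^2 * inverse (q^2 * w) = inverse w"
    using q(2) w by (simp add: field_simps)
  have "odd_prod q (inverse (q^2 * w))
      = (1 + q * inverse (q^2 * w)) * odd_prod q (q^2 * inverse (q^2 * w))"
    by (rule odd_prod_shift[OF q(1)])
  then have "odd_prod q (inverse (q^2 * w)) = (1 + q * inverse (q^2 * w)) * odd_prod q (inverse w)"
    unfolding inv .
  moreover have "q * w * (1 + q * inverse (q^2 * w)) = 1 + q * w"
    using q(2) w by (simp add: field_simps power2_eq_square)
  ultimately show ?thesis
    unfolding theta_prod_def odd_prod_shift[OF q(1), of w] by (simp add: mult_ac)
qed

lemma theta_prod_pair_shift:
  assumes q: "norm q < 1" "q \<noteq> 0" and cd: "c * d = 1" and z: "z \<noteq> 0"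
  shows "q^2 * z^2 * (theta_prod q (c * (q^2 * z)) * theta_prod q (d * (q^2 * z)))
    = theta_prod q (c * z) * theta_prod q (d * z)"
proof -
  have "c \<noteq> 0" "d \<noteq> 0"
    using cd by auto
  then have "theta_prod q (c * z) * theta_prod q (d * z)
      = (q * (c * z) * theta_prod q (q^2 * (c * z))) * (q * (d * z) * theta_prod q (q^2 * (d * z)))"
    using q z by (simp add: theta_prod_shift)
  also have "\<dots> = (c * d) * (q^2 * z^2 * (theta_prod q (c * (q^2 * z)) * theta_prod q (d * (q^2 * z))))"
    by (simp add: algebra_simps power2_eq_square)
  finally show ?thesis
    using cd by simp
qed

lemma theta_prod_minus_iq:
  assumes q: "norm q < 1" "q \<noteq> 0"
  shows "theta_prod q (- (\<i> * q)) = \<i> * theta_prod q (\<i> * q)"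
proof -
  have "theta_prod q (- (\<i> * q)) = theta_prod q (\<i> * inverse q)"
    using theta_prod_inverse[of q "\<i> * inverse q"] q(2) by (simp add: field_simps)
  also have "\<dots> = q * (\<i> * inverse q) * theta_prod q (q^2 * (\<i> * inverse q))"
    using theta_prod_shift[OF q] q(2) by simp
  also have "q * (\<i> * inverse q) = \<i>"
    using q(2) by (simp add: field_simps)
  also have "q^2 * (\<i> * inverse q) = \<i> * q"
    using q(2) by (simp add: field_simps power2_eq_square)
  finally show ?thesis .
qed

definition theta_sqsum :: "complex \<Rightarrow> complex \<Rightarrow> complex" where
  "theta_sqsum q z = theta_prod q z ^ 2 + theta_prod q (- z) ^ 2"

definition theta_iprod :: "complex \<Rightarrow> complex \<Rightarrow> complex" where
  "theta_iprod q z = theta_prod q (\<i> * z) * theta_prod q (- \<i> * z)"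

lemma theta_sqsum_shift:
  assumes "norm q < 1" "q \<noteq> 0" "z \<noteq> 0"
  shows "q^2 * z^2 * theta_sqsum q (q^2 * z) = theta_sqsum q z"
  using theta_prod_pair_shift[OF assms(1,2) _ assms(3), of 1 1]
    theta_prod_pair_shift[OF assms(1,2) _ assms(3), of "-1" "-1"]
  by (simp add: theta_sqsum_def power2_eq_square distrib_left)

lemma theta_iprod_shift:
  assumes "norm q < 1" "q \<noteq> 0" "z \<noteq> 0"
  shows "q^2 * z^2 * theta_iprod q (q^2 * z) = theta_iprod q z"
  using theta_prod_pair_shift[OF assms(1,2) _ assms(3), of "\<i>" "- \<i>"]
  by (simp add: theta_iprod_def mult.assoc)

lemma theta_sqsum_minus: "theta_sqsum q (- z) = theta_sqsum q z"
  by (simp add: theta_sqsum_def)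

lemma theta_sqsum_iq:
  assumes "norm q < 1" "q \<noteq> 0"
  shows "theta_sqsum q (\<i> * q) = 0"
  using theta_prod_minus_iq[OF assms]
  by (simp add: theta_sqsum_def power_mult_distrib)

lemma theta_iprod_factorization:
  assumes q: "norm q < 1" "q \<noteq> 0"
  obtains D where "D holomorphic_on {z. norm q ^ 3 < norm z \<and> norm z < 1 / norm q}"
    "\<And>z. norm q ^ 3 < norm z \<Longrightarrow> norm z < 1 / norm q \<Longrightarrow> D z \<noteq> 0"
    "\<And>z. z \<noteq> 0 \<Longrightarrow> z^2 * theta_iprod q z = (z^2 + q^2) * D z"
proof
  let ?P = "odd_prod q"
  define D where "D z = ?P (\<i> * z) * ?P (- \<i> * z) * ?P (q^2 / (\<i> * z)) * ?P (q^2 / (- \<i> * z))"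
    for z
  show "D holomorphic_on {z. norm q ^ 3 < norm z \<and> norm z < 1 / norm q}"
    unfolding D_def using q
    by (intro holomorphic_intros odd_prod_holomorphic) (auto simp: norm_mult)
  show "D z \<noteq> 0" if z: "norm q ^ 3 < norm z" "norm z < 1 / norm q" for z
  proof -
    have "norm z * norm q < 1"
      using z(2) q by (simp add: field_simps)
    moreover have "0 < norm z"
      using q(2) z(1) by (meson less_trans zero_less_norm_iff zero_less_power)
    then have "norm (q^2 / (\<i> * z)) * norm q < 1"
      using z(1) by (simp add: norm_mult norm_divide norm_power field_simps power3_eq_cube power2_eq_square)
    ultimately show ?thesis
      unfolding D_def using q(1) by (simp add: odd_prod_nonzero norm_mult)
  qed
  show "z^2 * theta_iprod q z = (z^2 + q^2) * D z" if z: "z \<noteq> 0" for z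
  proof -
    have shift: "?P (inverse (c * z)) = (1 + q / (c * z)) * ?P (q^2 / (c * z))" for c
      using odd_prod_shift[OF q(1), of "inverse (c * z)"] by (simp add: divide_inverse)
    have "z^2 * theta_iprod q z
        = z^2 * ?P (\<i> * z) * ?P (inverse (\<i> * z)) * ?P (- \<i> * z) * ?P (inverse (- \<i> * z))"
      unfolding theta_iprod_def theta_prod_def by (simp only: mult_ac)
    also have "\<dots> = z^2 * ((1 + q / (\<i> * z)) * (1 + q / (- \<i> * z))) * D z"
      unfolding shift D_def by (simp only: mult_ac)
    also have "z^2 * ((1 + q / (\<i> * z)) * (1 + q / (- \<i> * z))) = z^2 + q^2"
      using z by (simp add: field_simps power2_eq_square)
    finally show ?thesis .
  qed
qed

lemma theta_quotient_holomorphic: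
  assumes q: "norm q < 1" "q \<noteq> 0"
  defines "U \<equiv> {z::complex. norm q ^ 3 < norm z \<and> norm z < 1 / norm q}"
  obtains G where "G holomorphic_on U" "\<And>z. z \<in> U \<Longrightarrow> G z * theta_iprod q z = theta_sqsum q z"
proof -
  obtain D where D: "D holomorphic_on {z. norm q ^ 3 < norm z \<and> norm z < 1 / norm q}"
    "\<And>z. norm q ^ 3 < norm z \<Longrightarrow> norm z < 1 / norm q \<Longrightarrow> D z \<noteq> 0"
    "\<And>z. z \<noteq> 0 \<Longrightarrow> z^2 * theta_iprod q z = (z^2 + q^2) * D z"
    using theta_iprod_factorization[OF q] by blast
  have U0: "z \<noteq> 0" and DU: "D z \<noteq> 0" if "z \<in> U" for z
    using that D(2) by (auto simp: U_def)
  have "open U"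
    unfolding U_def by (intro open_Collect_conj open_Collect_less continuous_intros)
  \<comment> \<open>H vanishes at +-iq, so both linear factors of z^2 + q^2 can be divided out of it.\<close>
  define H where "H z = theta_sqsum q z * z^2 / D z" for z
  have "H holomorphic_on U"
    unfolding H_def theta_sqsum_def theta_prod_def
    by (intro holomorphic_intros odd_prod_holomorphic D(1)[folded U_def] q(1)) (auto dest: U0 DU)
  moreover have "H (\<i> * q) = 0"
    by (simp add: H_def theta_sqsum_iq[OF q])
  ultimately obtain H1 where H1: "H1 holomorphic_on U" "\<And>z. H z = (z - \<i> * q) * H1 z"
    using holomorphic_factor_zero[OF _ \<open>open U\<close>] by blast
  have "H1 (- \<i> * q) = 0"
    using H1(2)[of "- \<i> * q"] q(2) by (simp add: H_def theta_sqsum_minus theta_sqsum_iq[OF q])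
  then obtain G where G: "G holomorphic_on U" "\<And>z. H1 z = (z + \<i> * q) * G z"
    using holomorphic_factor_zero[OF H1(1) \<open>open U\<close>, of "- \<i> * q"] by auto
  show ?thesis
  proof (rule that[OF G(1)])
    fix z assume "z \<in> U"
    have "z^2 * (G z * theta_iprod q z) = (z^2 + q^2) * G z * D z"
      using D(3) U0[OF \<open>z \<in> U\<close>] by (simp add: mult_ac)
    also have "(z^2 + q^2) * G z = H z"
      using H1(2) G(2) by (simp add: algebra_simps power2_eq_square)
    also have "H z * D z = z^2 * theta_sqsum q z"
      using DU[OF \<open>z \<in> U\<close>] by (simp add: H_def)
    finally show "G z * theta_iprod q z = theta_sqsum q z"
      using U0[OF \<open>z \<in> U\<close>] by simp
  qed
qed

lemma theta_iprod_nonzero: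
  assumes q: "norm q < 1" "q \<noteq> 0"
    and z: "norm q ^ 3 < norm z" "norm z < 1 / norm q" "z^2 + q^2 \<noteq> 0"
  shows "theta_iprod q z \<noteq> 0"
proof -
  obtain D where D: "D holomorphic_on {z. norm q ^ 3 < norm z \<and> norm z < 1 / norm q}"
    "\<And>z. norm q ^ 3 < norm z \<Longrightarrow> norm z < 1 / norm q \<Longrightarrow> D z \<noteq> 0"
    "\<And>z. z \<noteq> 0 \<Longrightarrow> z^2 * theta_iprod q z = (z^2 + q^2) * D z"
    using theta_iprod_factorization[OF q] by blast
  have "z \<noteq> 0"
    using z(1) by auto
  then have "z^2 * theta_iprod q z \<noteq> 0"
    using D(2,3) z by simp
  then show ?thesis
    by simp
qed

lemma theta_quotient_shift_invariant:
  assumes q: "norm q < 1" "q \<noteq> 0"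
  defines "U \<equiv> {z::complex. norm q ^ 3 < norm z \<and> norm z < 1 / norm q}"
  assumes G: "\<And>z. z \<in> U \<Longrightarrow> G z * theta_iprod q z = theta_sqsum q z"
    and z: "z \<in> U" "q^2 * z \<in> U"
  shows "G (q^2 * z) = G z"
proof -
  have "norm q ^ 2 * norm q < norm q ^ 2 * norm z"
    using z(2) by (simp add: U_def norm_mult norm_power power3_eq_cube power2_eq_square mult_ac)
  then have "norm q < norm z"
    using q(2) by simp
  then have "z \<noteq> 0" "norm (q^2) < norm (z^2)"
    by (auto simp: norm_power power_strict_mono)
  then have "z^2 + q^2 \<noteq> 0"
    by (auto simp: add_eq_0_iff2)
  then have nz: "theta_iprod q z \<noteq> 0"
    using theta_iprod_nonzero[OF q] z(1) by (simp add: U_def)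
  have "G (q^2 * z) * theta_iprod q z = q^2 * z^2 * (G (q^2 * z) * theta_iprod q (q^2 * z))"
    using theta_iprod_shift[OF q \<open>z \<noteq> 0\<close>] by (simp add: mult_ac)
  also have "\<dots> = theta_sqsum q z"
    using G[OF z(2)] theta_sqsum_shift[OF q \<open>z \<noteq> 0\<close>] by simp
  also have "\<dots> = G z * theta_iprod q z"
    using G[OF z(1)] by simp
  finally show ?thesis
    using nz by simp
qed

lemma theta_sqsum_iprod_cross:
  assumes q: "norm q < 1" "q \<noteq> 0"
  shows "theta_sqsum q 1 * theta_iprod q \<i> = theta_sqsum q \<i> * theta_iprod q 1"
proof -
  define U where "U = {z::complex. norm q ^ 3 < norm z \<and> norm z < 1 / norm q}"
  obtain G where G: "G holomorphic_on U" "\<And>z. z \<in> U \<Longrightarrow> G z * theta_iprod q z = theta_sqsum q z"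
    using theta_quotient_holomorphic[OF q, folded U_def] by metis
  have periodic: "G (q^2 * z) = G z" if "z \<in> U" "q^2 * z \<in> U" for z
    by (rule theta_quotient_shift_invariant[OF q, folded U_def, OF G(2) that])
  have "norm q ^ 2 \<le> norm q ^ 1"
    using q by (intro power_decreasing) auto
  then have "norm (q^2) ^ 2 \<le> norm q ^ 3" "norm q ^ 3 < norm (q^2)" "1 < 1 / norm q"
    "1 / norm q * norm (q^2) \<le> 1"
    using q by (simp_all add: norm_power power_decreasing power_strict_decreasing flip: power_mult)
  then have "G constant_on U"
    using q(2) G(1) periodic unfolding U_def
    by (intro multiplicatively_periodic_holomorphic_constant) auto
  moreover have "1 \<in> U" "\<i> \<in> U"
    using q by (simp_all add: U_def power_less_one_iff)
  ultimately have "G 1 = G \<i>"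
    unfolding constant_on_def by metis
  have "theta_sqsum q 1 * theta_iprod q \<i> = G 1 * theta_iprod q 1 * theta_iprod q \<i>"
    using G(2)[OF \<open>1 \<in> U\<close>] by simp
  also have "\<dots> = G \<i> * theta_iprod q \<i> * theta_iprod q 1"
    using \<open>G 1 = G \<i>\<close> by (simp only: mult_ac)
  also have "\<dots> = theta_sqsum q \<i> * theta_iprod q 1"
    using G(2)[OF \<open>\<i> \<in> U\<close>] by simp
  finally show ?thesis .
qed

lemma odd_prod_zero [simp]: "odd_prod 0 w = 1"
  by (simp add: odd_prod_def)

lemma odd_prod_quartic_identity:
  assumes "norm q < 1"
  shows "odd_prod q (-1) ^ 2 * odd_prod q 1 ^ 2 * (odd_prod q (-1) ^ 4 + odd_prod q 1 ^ 4)
    = 2 * odd_prod (q^2) 1 ^ 4"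
proof (cases "q = 0")
  case False
  with assms have cross: "theta_sqsum q 1 * theta_iprod q \<i> = theta_sqsum q \<i> * theta_iprod q 1"
    by (rule theta_sqsum_iprod_cross)
  have "theta_prod q \<i> = odd_prod (q^2) 1" "theta_prod q (- \<i>) = odd_prod (q^2) 1"
    using odd_prod_mult_minus[OF assms, of \<i>] by (simp_all add: theta_prod_def mult.commute)
  moreover have "theta_prod q 1 = odd_prod q 1 ^ 2" "theta_prod q (-1) = odd_prod q (-1) ^ 2"
    by (simp_all add: theta_prod_def power2_eq_square)
  ultimately show ?thesis
    using cross by (simp add: theta_sqsum_def theta_iprod_def algebra_simps power2_eq_square power4_eq_xxxx)
qed simp

definition b_nome :: "complex \<Rightarrow> complex" where
  "b_nome q = 2 * (odd_prod q (-1) / odd_prod q 1) ^ 2"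

lemma b_nome_modular_equation:
  assumes q: "norm q < 1"
  defines "x \<equiv> b_nome q" and "y \<equiv> b_nome (q^2)"
  shows "x^2 * y^2 + 4 * y^2 - 16 * x = 0"
proof -
  define A B C where "A = odd_prod q (-1)" and "B = odd_prod q 1" and "C = odd_prod (q^2) 1"
  have q2: "norm (q^2) < 1"
    using q by (simp add: norm_power power_less_one_iff)
  have "B \<noteq> 0" "C \<noteq> 0"
    unfolding B_def C_def using q q2 by (simp_all add: odd_prod_nonzero)
  have "odd_prod (q^2) (-1) = A * B"
    unfolding A_def B_def using odd_prod_mult_minus[OF q, of 1] by (simp add: mult.commute)
  then have x: "x = 2 * (A / B)^2" and y: "y = 2 * (A * B / C)^2"
    by (simp_all add: x_def y_def b_nome_def A_def B_def C_def)
  have "x^2 * y^2 + 4 * y^2 - 16 * x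
      = 16 * A^2 * (A^2 * B^2 * (A^4 + B^4) - 2 * C^4) / (B^2 * C^4)"
    unfolding x y using \<open>B \<noteq> 0\<close> \<open>C \<noteq> 0\<close>
    by (simp add: field_simps power2_eq_square power4_eq_xxxx)
  also have "A^2 * B^2 * (A^4 + B^4) = 2 * C^4"
    unfolding A_def B_def C_def by (rule odd_prod_quartic_identity[OF q])
  finally show ?thesis
    by simp
qed

lemma modular_equation_iterate:
  fixes x y z :: "'a :: field_char_0"
  assumes xy: "x^2 * y^2 + 4 * y^2 - 16 * x = 0" and yz: "y^2 * z^2 + 4 * z^2 - 16 * y = 0"
  shows "(x + 2) ^ 4 * z ^ 4 = 2 ^ 8 * (x ^ 3 + 4 * x)"
proof -
  have y2: "y^2 * (x^2 + 4) = 16 * x"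
    using xy by (simp add: algebra_simps)
  have z2: "z^2 * (y^2 + 4) = 16 * y"
    using yz by (simp add: algebra_simps)
  have "16 * ((x + 2) ^ 4 * z ^ 4) = z^4 * (4 * (x + 2)^2)^2"
    by (simp add: algebra_simps power2_eq_square power4_eq_xxxx)
  also have "4 * (x + 2)^2 = (y^2 + 4) * (x^2 + 4)"
    using y2 by (simp add: algebra_simps power2_eq_square)
  also have "z^4 * ((y^2 + 4) * (x^2 + 4))^2 = (z^2 * (y^2 + 4))^2 * (x^2 + 4)^2"
    by (simp add: algebra_simps power2_eq_square power4_eq_xxxx)
  also have "\<dots> = 256 * (y^2 * (x^2 + 4)) * (x^2 + 4)"
    unfolding z2 by (simp add: algebra_simps power2_eq_square)
  also have "\<dots> = 16 * (2 ^ 8 * (x ^ 3 + 4 * x))"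
    unfolding y2 by (simp add: algebra_simps power2_eq_square power3_eq_cube)
  finally show ?thesis
    by (subst (asm) mult_left_cancel) simp_all
qed

lemma bfun_eq_b_nome:
  assumes "Im \<tau> > 0"
  shows "bfun \<tau> = b_nome (exp (pi * \<i> * \<tau> / 2))"
proof -
  define e where "e = exp (pi * \<i> * \<tau> / 2)"
  have "norm e < 1"
    using assms by (simp add: e_def)
  then have conv: "convergent_prod (\<lambda>m. 1 + c * e ^ (2*m+1))" for c
    by (intro convergent_prod_linear summable_norm_odd_powers)
  have "qpow \<tau> (real (Suc m) / 2 - 1 / 4) = e ^ (2*m+1)" for m
  proof -
    have "2 * complex_of_real pi * \<i> * complex_of_real (real (Suc m) / 2 - 1 / 4) * \<tau>
        = of_nat (2*m+1) * (pi * \<i> * \<tau> / 2)"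
      by (simp add: field_simps)
    then show ?thesis
      unfolding qpow_def e_def by (simp only: exp_of_nat_mult)
  qed
  then have "bfun \<tau> = 2 * (\<Prod>m. ((1 + (-1) * e ^ (2*m+1)) / (1 + 1 * e ^ (2*m+1))) ^ 2)"
    by (simp add: bfun_def)
  also have "\<dots> = 2 * (\<Prod>m. (1 + (-1) * e ^ (2*m+1)) / (1 + 1 * e ^ (2*m+1))) ^ 2"
    by (simp only: prodinf_power[OF convergent_prod_divide[OF conv conv]])
  also have "\<dots> = 2 * (odd_prod e (-1) / odd_prod e 1) ^ 2"
    unfolding odd_prod_def by (simp only: prodinf_divide[OF conv conv])
  finally show ?thesis
    by (simp add: b_nome_def e_def)
qed

theorem proposition7:
  fixes \<tau> :: complex
  assumes "Im \<tau> > 0"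
  shows "(bfun \<tau>)\<^sup>2 * (bfun (2 * \<tau>))\<^sup>2 + 4 * (bfun (2 * \<tau>))\<^sup>2 - 16 * bfun \<tau> = 0 \<and>
         (bfun \<tau> + 2) ^ 4 * (bfun (4 * \<tau>)) ^ 4 = 2 ^ 8 * ((bfun \<tau>) ^ 3 + 4 * bfun \<tau>)"
proof -
  define e where "e = exp (pi * \<i> * \<tau> / 2)"
  have e: "norm e < 1" and e2: "norm (e^2) < 1"
    using assms by (simp_all add: e_def norm_power power_less_one_iff)
  have "bfun (of_nat k * \<tau>) = b_nome (e ^ k)" if "k > 0" for k
    using bfun_eq_b_nome[of "of_nat k * \<tau>"] assms that
    by (simp add: e_def exp_of_nat_mult[symmetric] mult_ac)
  from this[of 1] this[of 2] this[of 4]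
  have b: "bfun \<tau> = b_nome e" "bfun (2 * \<tau>) = b_nome (e^2)" "bfun (4 * \<tau>) = b_nome ((e^2)^2)"
    by (simp_all flip: power_mult)
  have "(bfun \<tau>)\<^sup>2 * (bfun (2 * \<tau>))\<^sup>2 + 4 * (bfun (2 * \<tau>))\<^sup>2 - 16 * bfun \<tau> = 0"
    unfolding b by (rule b_nome_modular_equation[OF e])
  moreover have "(bfun (2 * \<tau>))\<^sup>2 * (bfun (4 * \<tau>))\<^sup>2 + 4 * (bfun (4 * \<tau>))\<^sup>2 - 16 * bfun (2 * \<tau>) = 0"
    unfolding b by (rule b_nome_modular_equation[OF e2])
  ultimately show ?thesis
    using modular_equation_iterate by blast
qed

end
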